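(* Let $m\ge 2$ and let $n_1,\dots,n_m\ge 3$ be odd integers. Then the partition dimension of the odd chain cycle $\mathcal{C}(C_{n_1},\dots,C_{n_m})$ equals $3$.
   Context: Let $C_{n_1},\dots,C_{n_m}$ be pairwise disjoint cycles, $V(C_{n_i})=\{v^i_1,\dots,v^i_{n_i}\}$ with $v^i_j$ adjacent to $v^i_{j+1}$ (indices mod $n_i$). The odd chain cycle $\mathcal{C}(C_{n_1},\dots,C_{n_m})$ (all $n_i$ odd) is obtained from the disjoint union of these cycles by identifying $v^i_{(n_i+1)/2+1}$ with $v^{i+1}_1$ for each $i=1,\dots,m-1$. For an ordered partition $\Pi=\{Q_1,\dots,Q_k\}$ of $V(G)$, $r(v\mid\Pi)=(d(v,Q_1),\dots,d(v,Q_k))$ where $d(v,Q)=\min_{q\in Q}d(v,q)$; $\Pi$ is resolving if distinct vertices have distinct representations; the partition dimension $pd(G)$ is the minimum $k$ for which a resolving $k$-partition exists. *)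

theory Defs
  imports Main
begin

inductive walk :: "('a \<Rightarrow> 'a \<Rightarrow> bool) \<Rightarrow> nat \<Rightarrow> 'a \<Rightarrow> 'a \<Rightarrow> bool" for E where
  walk0: "walk E 0 u u"
| walkS: "E u w \<Longrightarrow> walk E k w v \<Longrightarrow> walk E (Suc k) u v"

definition gdist :: "('a \<Rightarrow> 'a \<Rightarrow> bool) \<Rightarrow> 'a \<Rightarrow> 'a \<Rightarrow> nat" where
  "gdist E u v = (LEAST k. walk E k u v)"

definition setdist :: "('a \<Rightarrow> 'a \<Rightarrow> bool) \<Rightarrow> 'a \<Rightarrow> 'a set \<Rightarrow> nat" where
  "setdist E v Q = Min (gdist E v ` Q)"

definition ordered_partition :: "'a set \<Rightarrow> 'a set list \<Rightarrow> bool" where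
  "ordered_partition V P \<longleftrightarrow>
     (\<forall>Q\<in>set P. Q \<noteq> {}) \<and> \<Union>(set P) = V \<and>
     (\<forall>i<length P. \<forall>j<length P. i \<noteq> j \<longrightarrow> P!i \<inter> P!j = {})"

definition representation :: "('a \<Rightarrow> 'a \<Rightarrow> bool) \<Rightarrow> 'a set list \<Rightarrow> 'a \<Rightarrow> nat list" where
  "representation E P v = map (setdist E v) P"

definition resolving_partition :: "'a set \<Rightarrow> ('a \<Rightarrow> 'a \<Rightarrow> bool) \<Rightarrow> 'a set list \<Rightarrow> bool" where
  "resolving_partition V E P \<longleftrightarrow>
     ordered_partition V P \<and> inj_on (representation E P) V"

definition partition_dimension :: "'a set \<Rightarrow> ('a \<Rightarrow> 'a \<Rightarrow> bool) \<Rightarrow> nat" where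
  "partition_dimension V E = (LEAST k. \<exists>P. length P = k \<and> resolving_partition V E P)"

text \<open>Cycle i (1 \<le> i \<le> m) has vertices v^i_j = (i,j), 1 \<le> j \<le> n i.  The identification of
  v^i_{(n_i+1)/2+1} with v^{i+1}_1 is realised by mapping v^{i+1}_1 (i \<ge> 1) to the
  representative (i, (n i + 1) div 2 + 1).\<close>

definition occ_rep :: "(nat \<Rightarrow> nat) \<Rightarrow> nat \<times> nat \<Rightarrow> nat \<times> nat" where
  "occ_rep n x = (case x of (i, j) \<Rightarrow>
      if 2 \<le> i \<and> j = 1 then (i - 1, (n (i - 1) + 1) div 2 + 1) else (i, j))"

definition occ_vertices :: "nat \<Rightarrow> (nat \<Rightarrow> nat) \<Rightarrow> (nat \<times> nat) set" where
  "occ_vertices m n = occ_rep n ` {(i, j). 1 \<le> i \<and> i \<le> m \<and> 1 \<le> j \<and> j \<le> n i}"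

definition occ_cycle_edge :: "nat \<Rightarrow> (nat \<Rightarrow> nat) \<Rightarrow> nat \<times> nat \<Rightarrow> nat \<times> nat \<Rightarrow> bool" where
  "occ_cycle_edge m n u v \<longleftrightarrow>
     (\<exists>i j. 1 \<le> i \<and> i \<le> m \<and> 1 \<le> j \<and> j \<le> n i \<and>
        u = occ_rep n (i, j) \<and> v = occ_rep n (i, j mod n i + 1))"

definition occ_edge :: "nat \<Rightarrow> (nat \<Rightarrow> nat) \<Rightarrow> nat \<times> nat \<Rightarrow> nat \<times> nat \<Rightarrow> bool" where
  "occ_edge m n u v \<longleftrightarrow> occ_cycle_edge m n u v \<or> occ_cycle_edge m n v u"

end

theory Submission
  imports Defs
begin

text \<open>Upper bound: the vertex \<open>v\<^sup>1\<^sub>1\<close>, the first halves of all cycles and the remaining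
  vertices form a resolving partition.  Along the chain the distance to \<open>v\<^sup>1\<^sub>1\<close> strictly
  increases from one cycle to the next, and within a cycle it takes each value at most once on
  the first half and at most once on the rest.

  Lower bound: in a resolving partition \<open>{A, B}\<close> every vertex of \<open>A\<close> with a neighbour in
  \<open>B\<close> has representation \<open>(0, 1)\<close>, so at most one edge joins \<open>A\<close> and \<open>B\<close>.  Such an edge
  exists by connectivity, it lies on some cycle, and a cycle meeting both classes contains at
  least two such edges.\<close>

lemma walk_append: "walk E k u w \<Longrightarrow> walk E l w v \<Longrightarrow> walk E (k + l) u v"
  by (induction rule: walk.induct) (auto intro: walk.intros)

lemma walk_sym:
  assumes "\<And>x y. E x y \<Longrightarrow> E y x"
  shows "walk E k u v \<Longrightarrow> walk E k v u"
proof (induction rule: walk.induct)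
  case (walkS u w k v)
  then show ?case
    using walk_append[of E k v w 1 u] by (auto intro: walk.intros assms)
qed (rule walk0)

lemma walk_exits:
  "walk E k a b \<Longrightarrow> a \<in> S \<Longrightarrow> b \<notin> S \<Longrightarrow> \<exists>x y. x \<in> S \<and> y \<notin> S \<and> E x y"
  by (induction rule: walk.induct) blast+

lemma gdist_le: "walk E k u v \<Longrightarrow> gdist E u v \<le> k"
  unfolding gdist_def by (rule Least_le)

lemma walk_gdist: "walk E k u v \<Longrightarrow> walk E (gdist E u v) u v"
  unfolding gdist_def by (rule LeastI)

lemma gdist_self: "gdist E u u = 0"
  using gdist_le[OF walk0] by simp

lemma gdist_eq_0_iff: "walk E k u v \<Longrightarrow> gdist E u v = 0 \<longleftrightarrow> u = v"
  using walk_gdist[of E k u v] gdist_self by (auto elim: walk.cases)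

lemma gdist_eq_1: "E u v \<Longrightarrow> u \<noteq> v \<Longrightarrow> gdist E u v = 1"
  using gdist_le[of E 1 u v] gdist_eq_0_iff[of E 1 u v] by (force intro: walk.intros)

lemma setdist_singleton: "setdist E u {q} = gdist E u q"
  unfolding setdist_def by simp

lemma setdist_eq_0_iff:
  assumes "finite Q" "Q \<noteq> {}" "\<And>q. q \<in> Q \<Longrightarrow> \<exists>k. walk E k u q"
  shows "setdist E u Q = 0 \<longleftrightarrow> u \<in> Q"
proof
  assume "setdist E u Q = 0"
  then obtain q where "q \<in> Q" "gdist E u q = 0"
    using Min_in[of "gdist E u ` Q"] assms(1,2) unfolding setdist_def by auto
  then show "u \<in> Q"
    using assms(3) gdist_eq_0_iff by metis
next
  assume "u \<in> Q"
  then show "setdist E u Q = 0"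
    using assms(1) gdist_self[of E u] Min_le[of "gdist E u ` Q" 0]
    unfolding setdist_def by force
qed

lemma setdist_eq_1:
  assumes "finite Q" "u \<notin> Q" "\<And>q. q \<in> Q \<Longrightarrow> \<exists>k. walk E k u q"
    and "q \<in> Q" "E u q"
  shows "setdist E u Q = 1"
  unfolding setdist_def
proof (rule Min_eqI)
  show "y \<ge> 1" if "y \<in> gdist E u ` Q" for y
    using that assms(2,3) gdist_eq_0_iff by fastforce
  show "1 \<in> gdist E u ` Q"
    using assms(2,4,5) gdist_eq_1[of E u q] by force
qed (use assms(1) in simp)

lemma ordered_partition_two:
  "ordered_partition V [A, B] \<longleftrightarrow> A \<noteq> {} \<and> B \<noteq> {} \<and> A \<union> B = V \<and> A \<inter> B = {}"
  unfolding ordered_partition_def by (simp add: less_Suc_eq all_conj_distrib) blast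

lemma ordered_partition_three:
  "ordered_partition V [A, B, C] \<longleftrightarrow> A \<noteq> {} \<and> B \<noteq> {} \<and> C \<noteq> {} \<and> A \<union> B \<union> C = V \<and>
     A \<inter> B = {} \<and> A \<inter> C = {} \<and> B \<inter> C = {}"
  unfolding ordered_partition_def numeral_3_eq_3
  by (simp add: less_Suc_eq all_conj_distrib) blast

lemma resolving_two_partition_crossing_edge_unique:
  assumes res: "resolving_partition V E [A, B]" and "finite V"
    and sym: "\<And>u v. E u v \<Longrightarrow> E v u"
    and conn: "\<And>u v. u \<in> V \<Longrightarrow> v \<in> V \<Longrightarrow> \<exists>k. walk E k u v"
    and "x \<in> A" "y \<in> B" "E x y" "x' \<in> A" "y' \<in> B" "E x' y'"
  shows "x = x' \<and> y = y'"
proof -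
  have part: "A \<union> B = V" "A \<inter> B = {}"
    using res unfolding resolving_partition_def ordered_partition_two by auto
  then have fin: "finite A" "finite B"
    using \<open>finite V\<close> by (metis finite_Un)+
  have setdist_end: "setdist E p S = 0 \<and> setdist E p T = 1"
    if "p \<in> S" "q \<in> T" "E p q" "S \<union> T = V" "S \<inter> T = {}" "finite S" "finite T" for p q S T
  proof -
    have reach: "\<exists>k. walk E k p t" if "t \<in> S \<union> T" for t
      using conn \<open>p \<in> S\<close> that \<open>S \<union> T = V\<close> by blast
    have "setdist E p S = 0"
      using setdist_eq_0_iff[of S E p] reach \<open>p \<in> S\<close> \<open>finite S\<close> by blast
    moreover have "p \<notin> T"
      using that(1,5) by blast
    ultimately show ?thesis
      using setdist_eq_1[of T p E q] reach that(2,3,7) by blast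
  qed
  have rep: "representation E [A, B] p = [0, 1] \<and> representation E [A, B] q = [1, 0]"
    if "p \<in> A" "q \<in> B" "E p q" for p q
  proof -
    have "B \<union> A = V" "B \<inter> A = {}"
      using part by blast+
    then show ?thesis
      using setdist_end[OF that part fin] setdist_end[OF that(2,1) sym[OF that(3)] _ _ fin(2,1)]
      unfolding representation_def by simp
  qed
  have inj: "inj_on (representation E [A, B]) V"
    using res unfolding resolving_partition_def by blast
  have "x \<in> V" "x' \<in> V" "y \<in> V" "y' \<in> V"
    using assms(5-) part by blast+
  then show ?thesis
    using inj_onD[OF inj] rep[OF assms(5-7)] rep[OF assms(8-10)] by metis
qed

lemma ordered_partition_two_crossing_edge:
  assumes "ordered_partition V [A, B]"
    and "\<And>u v. u \<in> V \<Longrightarrow> v \<in> V \<Longrightarrow> \<exists>k. walk E k u v"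
    and "\<And>u v. E u v \<Longrightarrow> v \<in> V"
  obtains x y where "x \<in> A" "y \<in> B" "E x y"
proof -
  obtain a b where "a \<in> A" "b \<in> B" and part: "A \<union> B = V" "A \<inter> B = {}"
    using assms(1) unfolding ordered_partition_two by blast
  then obtain k where "walk E k a b"
    using assms(2) by blast
  moreover have "b \<notin> A"
    using \<open>b \<in> B\<close> part(2) by blast
  ultimately obtain x y where "x \<in> A" "y \<notin> A" "E x y"
    using walk_exits \<open>a \<in> A\<close> by metis
  then show thesis
    using that assms(3) part by blast
qed

lemma lift_Suc_eq:
  fixes g :: "nat \<Rightarrow> 'a"
  shows "a \<le> b \<Longrightarrow> (\<And>t. a \<le> t \<Longrightarrow> t < b \<Longrightarrow> g t = g (Suc t)) \<Longrightarrow> g a = g b"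
  by (induction b rule: dec_induct) auto

lemma cyclic_change_twice:
  fixes c :: "nat \<Rightarrow> 'a"
  assumes j: "1 \<le> j" "j \<le> N" and change: "c j \<noteq> c (j mod N + 1)"
  obtains j' where "1 \<le> j'" "j' \<le> N" "j' \<noteq> j" "c j' \<noteq> c (j' mod N + 1)"
proof -
  define p where "p t = (j - 1 + t) mod N + 1" for t
  have p_Suc: "p t mod N + 1 = p (Suc t)" for t
    unfolding p_def by (simp add: mod_Suc_eq)
  have p_range: "1 \<le> p t \<and> p t \<le> N" for t
    using j unfolding p_def by (simp add: Suc_leI)
  have p_ne: "p t \<noteq> j" if "1 \<le> t" "t < N" for t
  proof
    assume "p t = j"
    then have "(j - 1 + t) mod N = j - 1"
      unfolding p_def using j by simp
    then show False
      using j that by (cases "j - 1 + t < N") (auto simp: mod_if split: if_splits)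
  qed
  have "p 1 = j mod N + 1"
    unfolding p_def using j by simp
  moreover have "p N = j"
    unfolding p_def mod_add_self2 using j by simp
  ultimately have "c (p 1) \<noteq> c (p N)"
    using change by simp
  then obtain t where "1 \<le> t" "t < N" "c (p t) \<noteq> c (p (Suc t))"
    using lift_Suc_eq[of 1 N "c \<circ> p"] j by fastforce
  then show thesis
    using that[of "p t"] p_range p_ne p_Suc by metis
qed

lemma odd_cycle_position_eq:
  fixes b b' k N :: nat
  assumes "N = 2 * k + 1" "min (b - 1) (N + 1 - b) = min (b' - 1) (N + 1 - b')"
    and "1 \<le> b" "b \<le> N" "1 \<le> b'" "b' \<le> N"
    and "2 \<le> b \<and> b \<le> k + 1 \<longleftrightarrow> 2 \<le> b' \<and> b' \<le> k + 1"
  shows "b = b'"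
proof -
  have "min (x - 1) (N + 1 - x) = (if x \<le> k + 1 then x - 1 else N + 1 - x)" for x
    using assms(1) by (simp add: min_def)
  then show ?thesis
    using assms by (simp split: if_splits)
qed

lemma cycle_succ_succ_ne:
  fixes N j :: nat
  assumes "3 \<le> N" "1 \<le> j" "j \<le> N"
  shows "(j mod N + 1) mod N + 1 \<noteq> j"
  using assms by (cases "j < N"; cases "j + 1 < N") (auto simp: mod_if)

locale odd_chain_cycle =
  fixes m :: nat and n :: "nat \<Rightarrow> nat"
  assumes two_le_m: "m \<ge> 2" and odd_cycles: "\<forall>i\<in>{1..m}. odd (n i) \<and> n i \<ge> 3"
begin

abbreviation V where "V \<equiv> occ_vertices m n"
abbreviation E where "E \<equiv> occ_edge m n"

lemma cycle_length_eq:
  assumes "1 \<le> i" "i \<le> m"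
  shows "n i = 2 * (n i div 2) + 1" "n i div 2 \<ge> 1"
proof -
  have "odd (n i)" "n i \<ge> 3"
    using odd_cycles assms by auto
  then show "n i = 2 * (n i div 2) + 1" "n i div 2 \<ge> 1"
    by presburger+
qed

lemma occ_rep_fixed: "2 \<le> j \<Longrightarrow> occ_rep n (i, j) = (i, j)"
  unfolding occ_rep_def by auto

lemma occ_rep_junction:
  "2 \<le> i \<Longrightarrow> i \<le> Suc m \<Longrightarrow> occ_rep n (i, 1) = (i - 1, n (i - 1) div 2 + 2)"
proof -
  assume "2 \<le> i" "i \<le> Suc m"
  then have "(n (i - 1) + 1) div 2 + 1 = n (i - 1) div 2 + 2"
    using cycle_length_eq(1)[of "i - 1"] by presburger
  then show ?thesis
    unfolding occ_rep_def using \<open>2 \<le> i\<close> by simp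
qed

lemma occ_rep_inj:
  "occ_rep n (i, p) = occ_rep n (i, q) \<Longrightarrow> 1 \<le> p \<Longrightarrow> 1 \<le> q \<Longrightarrow> p = q"
  unfolding occ_rep_def by (auto split: if_splits)

lemma mem_occ_vertices:
  "(i, j) \<in> V \<longleftrightarrow> 1 \<le> i \<and> i \<le> m \<and> 1 \<le> j \<and> j \<le> n i \<and> (2 \<le> i \<longrightarrow> 2 \<le> j)"
proof
  assume "(i, j) \<in> V"
  then obtain i' j' where "1 \<le> i'" "i' \<le> m" "1 \<le> j'" "j' \<le> n i'" "(i, j) = occ_rep n (i', j')"
    unfolding occ_vertices_def by auto
  then show "1 \<le> i \<and> i \<le> m \<and> 1 \<le> j \<and> j \<le> n i \<and> (2 \<le> i \<longrightarrow> 2 \<le> j)"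
  proof (cases "2 \<le> i' \<and> j' = 1")
    case True
    moreover have "n (i' - 1) = 2 * (n (i' - 1) div 2) + 1" "n (i' - 1) div 2 \<ge> 1"
      using True \<open>i' \<le> m\<close> cycle_length_eq[of "i' - 1"] by auto
    ultimately show ?thesis
      using \<open>(i, j) = occ_rep n (i', j')\<close> \<open>i' \<le> m\<close> occ_rep_junction[of i'] by auto
  qed (auto simp: occ_rep_def)
next
  assume "1 \<le> i \<and> i \<le> m \<and> 1 \<le> j \<and> j \<le> n i \<and> (2 \<le> i \<longrightarrow> 2 \<le> j)"
  moreover have "(i, j) = occ_rep n (i, j)" if "2 \<le> i \<longrightarrow> 2 \<le> j"
    using that unfolding occ_rep_def by auto
  ultimately show "(i, j) \<in> V"
    unfolding occ_vertices_def by blast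
qed

lemma occ_rep_mem:
  "1 \<le> i \<Longrightarrow> i \<le> m \<Longrightarrow> 1 \<le> j \<Longrightarrow> j \<le> n i \<Longrightarrow> occ_rep n (i, j) \<in> V"
  unfolding occ_vertices_def by blast

lemma finite_occ_vertices: "finite V"
proof -
  have "{(i, j). 1 \<le> i \<and> i \<le> m \<and> 1 \<le> j \<and> j \<le> n i} = (SIGMA i:{1..m}. {1..n i})"
    by auto
  then show ?thesis
    unfolding occ_vertices_def by simp
qed

lemma occ_edge_sym: "E u v \<Longrightarrow> E v u"
  unfolding occ_edge_def by blast

lemma occ_edge_cycle:
  "1 \<le> i \<Longrightarrow> i \<le> m \<Longrightarrow> 1 \<le> j \<Longrightarrow> j \<le> n i \<Longrightarrow>
   E (occ_rep n (i, j)) (occ_rep n (i, j mod n i + 1))"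
  unfolding occ_edge_def occ_cycle_edge_def by blast

lemma occ_edge_cases:
  assumes "E u v"
  obtains i j where "1 \<le> i" "i \<le> m" "1 \<le> j" "j \<le> n i"
    "{u, v} = {occ_rep n (i, j), occ_rep n (i, j mod n i + 1)}"
  using assms unfolding occ_edge_def occ_cycle_edge_def by blast

lemma cycle_succ_le_length: "1 \<le> i \<Longrightarrow> i \<le> m \<Longrightarrow> j mod n i + 1 \<le> n i"
  using cycle_length_eq(1)[of i] mod_less_divisor[of "n i" j] by linarith

lemma occ_edge_mem: "E u v \<Longrightarrow> v \<in> V"
  using occ_rep_mem cycle_succ_le_length by (elim occ_edge_cases) (auto simp: doubleton_eq_iff)

text \<open>\<open>junction_dist a\<close> is the distance from \<open>v\<^sup>1\<^sub>1\<close> to \<open>v\<^sup>a\<^sub>1\<close>: between consecutive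
  junctions the shorter arc of cycle \<open>l\<close> has length \<open>n l div 2\<close>.\<close>

definition junction_dist :: "nat \<Rightarrow> nat" where
  "junction_dist a = (\<Sum>l\<in>{1..<a}. n l div 2)"

definition root_dist :: "nat \<times> nat \<Rightarrow> nat" where
  "root_dist = (\<lambda>(i, j). junction_dist i + min (j - 1) (n i + 1 - j))"

lemma junction_dist_Suc_0 [simp]: "junction_dist (Suc 0) = 0"
  unfolding junction_dist_def by simp

lemma junction_dist_Suc: "1 \<le> a \<Longrightarrow> junction_dist (Suc a) = junction_dist a + n a div 2"
  unfolding junction_dist_def by simp

lemma junction_dist_mono: "a \<le> b \<Longrightarrow> junction_dist a \<le> junction_dist b"
  unfolding junction_dist_def by (rule sum_mono2) auto

lemma junction_dist_pos: "2 \<le> a \<Longrightarrow> 1 \<le> junction_dist a"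
  using junction_dist_mono[of 2 a] junction_dist_Suc[of 1] cycle_length_eq(2)[of 1] two_le_m
  by (simp add: numeral_2_eq_2)

lemma root_dist_root: "root_dist (1, 1) = 0"
  by (simp add: root_dist_def)

lemma root_dist_first_half:
  "j \<le> n i div 2 + 1 \<Longrightarrow> root_dist (i, j) = junction_dist i + (j - 1)"
  by (simp add: root_dist_def min_def)

lemma root_dist_second_half:
  assumes "1 \<le> i" "i \<le> m" "n i div 2 + 2 \<le> j"
  shows "root_dist (i, j) = junction_dist i + (n i + 1 - j)"
proof -
  have "n i + 1 - j \<le> j - 1"
    using cycle_length_eq(1)[of i] assms by linarith
  then show ?thesis
    by (simp add: root_dist_def min_absorb2)
qed

lemma root_dist_occ_rep:
  assumes "1 \<le> i" "i \<le> m" "1 \<le> j" "j \<le> n i"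
  shows "root_dist (occ_rep n (i, j)) = root_dist (i, j)"
proof (cases "2 \<le> i \<and> j = 1")
  case True
  have i1: "1 \<le> i - 1" "i - 1 \<le> m"
    using True assms by auto
  have "root_dist (occ_rep n (i, j)) = root_dist (i - 1, n (i - 1) div 2 + 2)"
    using True assms occ_rep_junction[of i] by simp
  also have "\<dots> = junction_dist (i - 1) + n (i - 1) div 2"
    using root_dist_second_half[OF i1, of "n (i - 1) div 2 + 2"] cycle_length_eq(1)[OF i1] by linarith
  also have "\<dots> = junction_dist i"
    using junction_dist_Suc[of "i - 1"] True by (cases i) auto
  finally show ?thesis
    using True root_dist_first_half by simp
qed (auto simp: occ_rep_def)

lemma root_dist_cycle_step:
  assumes "1 \<le> i" "i \<le> m" "1 \<le> j" "j \<le> n i"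
  shows "root_dist (i, j) \<le> root_dist (i, j mod n i + 1) + 1"
    and "root_dist (i, j mod n i + 1) \<le> root_dist (i, j) + 1"
proof -
  have "j mod n i + 1 = (if j < n i then j + 1 else 1)" "n i \<ge> 3"
    using assms odd_cycles by auto
  then show "root_dist (i, j) \<le> root_dist (i, j mod n i + 1) + 1"
    and "root_dist (i, j mod n i + 1) \<le> root_dist (i, j) + 1"
    using assms by (auto simp: root_dist_def min_def)
qed

lemma root_dist_edge: "E u v \<Longrightarrow> root_dist u \<le> root_dist v + 1"
proof (elim occ_edge_cases)
  fix i j
  assume ij: "1 \<le> i" "i \<le> m" "1 \<le> j" "j \<le> n i"
    and uv: "{u, v} = {occ_rep n (i, j), occ_rep n (i, j mod n i + 1)}"
  have "1 \<le> j mod n i + 1" "j mod n i + 1 \<le> n i"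
    using cycle_succ_le_length ij by auto
  then show "root_dist u \<le> root_dist v + 1"
    using uv root_dist_cycle_step[OF ij] root_dist_occ_rep ij
    by (auto simp: doubleton_eq_iff)
qed

lemma root_dist_walk: "walk E k u v \<Longrightarrow> root_dist u \<le> k + root_dist v"
proof (induction rule: walk.induct)
  case (walkS u w k v)
  then show ?case
    using root_dist_edge[of u w] by linarith
qed simp

lemma root_dist_descent:
  assumes v: "(i, j) \<in> V" and pos: "0 < root_dist (i, j)"
  obtains w where "E (i, j) w" "root_dist w = root_dist (i, j) - 1"
proof -
  have ij: "1 \<le> i" "i \<le> m" "1 \<le> j" "j \<le> n i" "2 \<le> i \<longrightarrow> 2 \<le> j"
    using v mem_occ_vertices by auto
  have j2: "2 \<le> j"
  proof (rule ccontr)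
    assume "\<not> 2 \<le> j"
    then have "i = 1" "j = 1"
      using ij by auto
    then show False
      using pos root_dist_root by simp
  qed
  have nk: "n i = 2 * (n i div 2) + 1" "1 \<le> n i div 2"
    using cycle_length_eq ij by auto
  have rep: "occ_rep n (i, j) = (i, j)"
    using occ_rep_fixed j2 by auto
  consider (before) "j \<le> n i div 2 + 1" | (after) "n i div 2 + 1 < j" "j < n i" | (last) "j = n i"
    using ij by linarith
  then show thesis
  proof cases
    case before
    have "E (occ_rep n (i, j - 1)) (i, j)"
      using occ_edge_cycle[of i "j - 1"] ij j2 rep by simp
    moreover have "root_dist (i, j - 1) = root_dist (i, j) - 1"
      using before j2 root_dist_first_half[of "j - 1" i] root_dist_first_half[of j i] by simp
    ultimately show thesis
      using that[OF occ_edge_sym] root_dist_occ_rep[of i "j - 1"] ij j2 by simp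
  next
    case after
    have "E (i, j) (occ_rep n (i, j + 1))"
      using occ_edge_cycle[of i j] ij after rep by simp
    moreover have "root_dist (i, j + 1) = root_dist (i, j) - 1"
      using after ij root_dist_second_half[of i "j + 1"] root_dist_second_half[of i j] by simp
    ultimately show thesis
      using that root_dist_occ_rep[of i "j + 1"] ij after by simp
  next
    case last
    have "E (i, j) (occ_rep n (i, 1))"
      using occ_edge_cycle[of i j] ij last rep by simp
    moreover have "root_dist (i, 1) = root_dist (i, j) - 1"
      using last nk ij root_dist_first_half[of 1 i] root_dist_second_half[of i j] by simp
    ultimately show thesis
      using that root_dist_occ_rep[of i 1] ij by simp
  qed
qed

lemma root_dist_eq_0:
  assumes "(i, j) \<in> V" "root_dist (i, j) = 0"
  shows "(i, j) = (1, 1)"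
proof (cases "j \<le> n i div 2 + 1")
  case True
  then have "junction_dist i = 0" "j = 1"
    using assms root_dist_first_half mem_occ_vertices by auto
  then show ?thesis
    using assms(1) junction_dist_pos[of i] mem_occ_vertices by force
next
  case False
  then show ?thesis
    using assms root_dist_second_half[of i j] mem_occ_vertices by auto
qed

lemma walk_to_root: "v \<in> V \<Longrightarrow> walk E (root_dist v) v (1, 1)"
proof (induction "root_dist v" arbitrary: v)
  case 0
  then show ?case
    using root_dist_eq_0 walk0 by (metis surj_pair)
next
  case (Suc k)
  obtain i j where v: "v = (i, j)"
    by force
  then obtain w where "E v w" "root_dist w = k"
    using root_dist_descent Suc.prems Suc.hyps(2) by (metis diff_Suc_1 zero_less_Suc)
  then show ?case
    using Suc.hyps occ_edge_mem walk.walkS by metis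
qed

lemma occ_connected: "u \<in> V \<Longrightarrow> v \<in> V \<Longrightarrow> \<exists>k. walk E k u v"
  using walk_append[OF walk_to_root walk_sym[OF occ_edge_sym walk_to_root]] by blast

lemma gdist_root: "v \<in> V \<Longrightarrow> gdist E v (1, 1) = root_dist v"
  using gdist_le[OF walk_to_root] root_dist_walk[OF walk_gdist[OF walk_to_root]]
  by (metis add.right_neutral le_antisym root_dist_root)

definition first_halves :: "(nat \<times> nat) set" where
  "first_halves = {(i, j). 1 \<le> i \<and> i \<le> m \<and> 2 \<le> j \<and> j \<le> n i div 2 + 1}"

lemma first_halves_subset: "first_halves \<subseteq> V"
proof
  fix v
  assume "v \<in> first_halves"
  then obtain i j where "v = (i, j)" "1 \<le> i" "i \<le> m" "2 \<le> j" "j \<le> n i div 2 + 1"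
    unfolding first_halves_def by blast
  then show "v \<in> V"
    using cycle_length_eq[of i] mem_occ_vertices by simp
qed

lemma root_dist_bounds:
  assumes "(a, b) \<in> V"
  shows "root_dist (a, b) \<le> junction_dist (Suc a)"
    and "2 \<le> a \<Longrightarrow> junction_dist a < root_dist (a, b)"
proof -
  have ab: "1 \<le> a" "a \<le> m" "1 \<le> b" "b \<le> n a" "2 \<le> a \<longrightarrow> 2 \<le> b"
    using assms mem_occ_vertices by auto
  have "root_dist (a, b) \<le> junction_dist a + n a div 2 \<and> (2 \<le> b \<longrightarrow> junction_dist a < root_dist (a, b))"
  proof (cases "b \<le> n a div 2 + 1")
    case True
    then show ?thesis
      using root_dist_first_half[OF True] by auto
  next
    case False
    then show ?thesis
      using root_dist_second_half[of a b] ab cycle_length_eq[of a] by simp arith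
  qed
  then show "root_dist (a, b) \<le> junction_dist (Suc a)" and "2 \<le> a \<Longrightarrow> junction_dist a < root_dist (a, b)"
    using ab junction_dist_Suc[of a] by auto
qed

lemma root_dist_same_cycle:
  assumes "(a, b) \<in> V" "(a', b') \<in> V" "root_dist (a, b) = root_dist (a', b')"
  shows "a = a'"
proof -
  have "root_dist (x, y) < root_dist (x', y')"
    if "(x, y) \<in> V" "(x', y') \<in> V" "x < x'" for x y x' y'
  proof -
    have "x \<ge> 1"
      using that(1) mem_occ_vertices by blast
    then have "root_dist (x, y) \<le> junction_dist x'"
      using root_dist_bounds(1)[OF that(1)] junction_dist_mono[of "Suc x" x'] that(3) by linarith
    also have "\<dots> < root_dist (x', y')"
      using root_dist_bounds(2)[OF that(2)] \<open>x \<ge> 1\<close> that(3) by linarith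
    finally show ?thesis .
  qed
  then show ?thesis
    using assms by (metis less_irrefl linorder_neqE_nat)
qed

lemma root_dist_first_halves_inj:
  assumes "u \<in> V" "v \<in> V" "root_dist u = root_dist v"
    and "u \<in> first_halves \<longleftrightarrow> v \<in> first_halves"
  shows "u = v"
proof -
  obtain a b b' where uv: "u = (a, b)" "v = (a, b')"
    using root_dist_same_cycle assms(1-3) by (metis surj_pair)
  have ab: "1 \<le> a" "a \<le> m" "1 \<le> b" "b \<le> n a" "1 \<le> b'" "b' \<le> n a"
    using assms(1,2) uv mem_occ_vertices by auto
  have "min (b - 1) (n a + 1 - b) = min (b' - 1) (n a + 1 - b')"
    using assms(3) uv by (simp add: root_dist_def)
  moreover have "2 \<le> b \<and> b \<le> n a div 2 + 1 \<longleftrightarrow> 2 \<le> b' \<and> b' \<le> n a div 2 + 1"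
    using assms(4) uv ab unfolding first_halves_def by simp
  ultimately have "b = b'"
    by (rule odd_cycle_position_eq[OF cycle_length_eq(1)[OF ab(1,2)] _ ab(3-6)])
  then show ?thesis
    using uv by simp
qed

lemma resolving_partition_three:
  "resolving_partition V E [{(1, 1)}, first_halves, V - insert (1, 1) first_halves]"
  (is "resolving_partition V E ?P")
proof -
  have n1: "n 1 = 2 * (n 1 div 2) + 1" "1 \<le> n 1 div 2"
    using cycle_length_eq[of 1] two_le_m by auto
  have root: "(1, 1) \<in> V" "(1, 1) \<notin> first_halves"
    using two_le_m n1 mem_occ_vertices unfolding first_halves_def by auto
  have "(1, 2) \<in> first_halves"
    using two_le_m n1 unfolding first_halves_def by auto
  moreover have "(1, n 1 div 2 + 2) \<in> V - insert (1, 1) first_halves"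
    using two_le_m n1 mem_occ_vertices unfolding first_halves_def by auto
  ultimately have "ordered_partition V ?P"
    unfolding ordered_partition_three using root first_halves_subset by blast
  moreover have "inj_on (representation E ?P) V"
  proof (rule inj_onI)
    fix u v
    assume uv: "u \<in> V" "v \<in> V" and "representation E ?P u = representation E ?P v"
    then have "gdist E u (1, 1) = gdist E v (1, 1)"
      and halves: "setdist E u first_halves = setdist E v first_halves"
      unfolding representation_def by (simp_all add: setdist_singleton)
    then have "root_dist u = root_dist v"
      using uv gdist_root by simp
    moreover have "setdist E w first_halves = 0 \<longleftrightarrow> w \<in> first_halves" if "w \<in> V" for w
    proof (rule setdist_eq_0_iff)
      show "finite first_halves"
        using first_halves_subset finite_occ_vertices by (rule finite_subset)
      show "\<exists>k. walk E k w q" if "q \<in> first_halves" for q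
        using occ_connected \<open>w \<in> V\<close> that first_halves_subset by blast
    qed (use \<open>(1, 2) \<in> first_halves\<close> in blast)
    ultimately show "u = v"
      using root_dist_first_halves_inj uv halves by metis
  qed
  ultimately show ?thesis
    unfolding resolving_partition_def by blast
qed

lemma no_resolving_two_partition: "\<not> resolving_partition V E [A, B]"
proof
  assume res: "resolving_partition V E [A, B]"
  then have part: "A \<union> B = V" "A \<inter> B = {}" and op: "ordered_partition V [A, B]"
    unfolding resolving_partition_def ordered_partition_two by auto
  obtain x y where xy: "x \<in> A" "y \<in> B" "E x y"
    using ordered_partition_two_crossing_edge[of V A B E] op occ_connected occ_edge_mem by blast
  then obtain i j where ij: "1 \<le> i" "i \<le> m" "1 \<le> j" "j \<le> n i"
    and edge: "{x, y} = {occ_rep n (i, j), occ_rep n (i, j mod n i + 1)}"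
    by (elim occ_edge_cases)
  define c where "c p = (occ_rep n (i, p) \<in> A)" for p
  have crossing: "{occ_rep n (i, p), occ_rep n (i, p mod n i + 1)} = {x, y}"
    if "1 \<le> p" "p \<le> n i" "c p \<noteq> c (p mod n i + 1)" for p
  proof -
    have "occ_rep n (i, p) \<in> V" "occ_rep n (i, p mod n i + 1) \<in> V"
      using occ_rep_mem ij that cycle_succ_le_length by auto
    moreover have "E (occ_rep n (i, p)) (occ_rep n (i, p mod n i + 1))"
      using occ_edge_cycle ij that by blast
    ultimately show ?thesis
      using resolving_two_partition_crossing_edge_unique[OF res finite_occ_vertices
          occ_edge_sym occ_connected _ _ _ xy] that(3) part occ_edge_sym
      unfolding c_def by blast
  qed
  have "x \<notin> B"
    using xy part by blast
  then have "c j \<noteq> c (j mod n i + 1)"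
    using edge xy part unfolding c_def by (auto simp: doubleton_eq_iff)
  then obtain j' where j': "1 \<le> j'" "j' \<le> n i" "j' \<noteq> j" "c j' \<noteq> c (j' mod n i + 1)"
    by (rule cyclic_change_twice[OF ij(3,4)])
  have "{occ_rep n (i, j), occ_rep n (i, j mod n i + 1)} = {occ_rep n (i, j'), occ_rep n (i, j' mod n i + 1)}"
    using crossing j' edge by simp
  then have "j = j' mod n i + 1 \<and> j' = j mod n i + 1"
    using j' ij occ_rep_inj by (auto simp: doubleton_eq_iff)
  moreover have "3 \<le> n i"
    using odd_cycles ij by auto
  ultimately show False
    using cycle_succ_succ_ne ij by metis
qed

lemma resolving_partition_length_ge_3: "resolving_partition V E P \<Longrightarrow> 3 \<le> length P"
proof (rule ccontr)
  assume res: "resolving_partition V E P" and "\<not> 3 \<le> length P"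
  then have "length P = 0 \<or> length P = Suc 0 \<or> length P = Suc (Suc 0)"
    by linarith
  then consider "P = []" | Q where "P = [Q]" | A B where "P = [A, B]"
    by (auto simp: length_Suc_conv)
  then show False
  proof cases
    case 1
    have "(1, 1) \<in> V"
      using two_le_m cycle_length_eq[of 1] mem_occ_vertices by auto
    then show False
      using res 1 unfolding resolving_partition_def ordered_partition_def by auto
  next
    case (2 Q)
    have V: "(1, 1) \<in> V" "(1, 2) \<in> V"
      using two_le_m cycle_length_eq[of 1] mem_occ_vertices by auto
    have "Q = V"
      using res 2 unfolding resolving_partition_def ordered_partition_def by auto
    then have "representation E P w = [0]" if "w \<in> V" for w
      using 2 that V finite_occ_vertices occ_connected setdist_eq_0_iff[of V E w]
      unfolding representation_def by auto
    then show False
      using res V inj_onD[of "representation E P" V "(1, 1)" "(1, 2)"]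
      unfolding resolving_partition_def by auto
  next
    case 3
    then show False
      using res no_resolving_two_partition by blast
  qed
qed

lemma partition_dimension_eq_3: "partition_dimension V E = 3"
  unfolding partition_dimension_def
proof (rule Least_equality)
  show "\<exists>P. length P = 3 \<and> resolving_partition V E P"
    using resolving_partition_three by (intro exI[of _ "[_, _, _]"]) simp
qed (use resolving_partition_length_ge_3 in blast)

end

theorem theorem2p5:
  fixes m :: nat and n :: "nat \<Rightarrow> nat"
  assumes "m \<ge> 2"
    and "\<forall>i\<in>{1..m}. odd (n i) \<and> n i \<ge> 3"
  shows "partition_dimension (occ_vertices m n) (occ_edge m n) = 3"
proof -
  interpret odd_chain_cycle m n
    using assms by unfold_locales
  show ?thesis
    by (rule partition_dimension_eq_3)
qed

end
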